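(* Let $L\ge1$ and let $a_{-L-1},\dots,a_{L}$ be positive reals. On the open set of $(x_{-L},\dots,x_{-1},E,x_1,\dots,x_L)\in\mathbb R^{2L+1}$ with all $x_j\ne0$, define $F_L(x_{-L},\dots,x_{-1},E,x_1,\dots,x_L)=(b_{-L},\dots,b_L)$ by $$b_n=\begin{cases}E-a_{n-1}x_{n-1}^{-1}-a_nx_n,& -L\le n<0,\\ E-a_{-1}x_{-1}^{-1}-a_0x_1^{-1},& n=0,\\ E-a_nx_{n+1}^{-1}-a_{n-1}x_n,& 0<n\le L,\end{cases}$$ with the convention $x_{-L-1}^{-1}=x_{L+1}^{-1}=0$. Then the absolute value of the Jacobian determinant of $F_L$ equals $$\Big(\prod_{n=-L}^{L-1}a_n\Big)\Big(1+\sum_{j=1}^{L}\prod_{i=1}^{j}x_i^{-2}+\sum_{j=1}^{L}\prod_{i=1}^{j}x_{-i}^{-2}\Big).$$ Moreover, if $u=(u(-L),\dots,u(L))$ is a normalized ($\sum|u(n)|^2=1$) real eigenvector, with all entries nonzero, of the tridiagonal matrix with diagonal $b_{-L},\dots,b_L$ and off-diagonal entries $a_{-L},\dots,a_{L-1}$, with eigenvalue $E$, and $x_n=u(n+1)/u(n)$ for $n<0$, $x_n=u(n-1)/u(n)$ for $n>0$, then this Jacobian equals $\big(\prod_{n=-L}^{L-1}a_n\big)u(0)^{-2}$, and $F_L(x_{-L},\dots,x_{-1},E,x_1,\dots,x_L)=(b_{-L},\dots,b_L)$. *)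

theory Defs
  imports "HOL-Analysis.Analysis" "Jordan_Normal_Form.Char_Poly"
begin

text \<open>Coordinates of a point of R^(2L+1) are indexed by the integers -L..L;
  coordinate 0 holds E, coordinate n (n \<noteq> 0) holds x_n.\<close>

definition idx :: "nat \<Rightarrow> nat \<Rightarrow> int" where
  "idx L i = int i - int L"

definition xinv :: "nat \<Rightarrow> (int \<Rightarrow> real) \<Rightarrow> int \<Rightarrow> real" where
  "xinv L p k = (if k < - int L \<or> k > int L then 0 else 1 / p k)"

definition FL :: "nat \<Rightarrow> (int \<Rightarrow> real) \<Rightarrow> (int \<Rightarrow> real) \<Rightarrow> int \<Rightarrow> real" where
  "FL L a p n =
     (if n < 0 then p 0 - a (n - 1) * xinv L p (n - 1) - a n * p n
      else if n = 0 then p 0 - a (-1) * xinv L p (-1) - a 0 * xinv L p 1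
      else p 0 - a n * xinv L p (n + 1) - a (n - 1) * p n)"

definition jac_FL :: "nat \<Rightarrow> (int \<Rightarrow> real) \<Rightarrow> (int \<Rightarrow> real) \<Rightarrow> real mat" where
  "jac_FL L a p = mat (2 * L + 1) (2 * L + 1)
     (\<lambda>(i, j). deriv (\<lambda>t. FL L a (p(idx L j := t)) (idx L i)) (p (idx L j)))"

definition tridiag :: "nat \<Rightarrow> (int \<Rightarrow> real) \<Rightarrow> (int \<Rightarrow> real) \<Rightarrow> real mat" where
  "tridiag L a b = mat (2 * L + 1) (2 * L + 1)
     (\<lambda>(i, j). if i = j then b (idx L i)
               else if j = i + 1 then a (idx L i)
               else if i = j + 1 then a (idx L j)
               else 0)"

end

theory Submission
  imports Defs
begin

(*
  Every column of the Jacobian of F_L except the E-column (all ones) has two nonzero entries: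
  -a on the diagonal and a/x_m^2 one row closer to the centre.  Listing the sites as
  -L, ..., -1, L, ..., 1, 0 therefore makes the matrix lower triangular apart from its last
  column.  That column can be cleared above the diagonal by adding a combination of the other
  columns, whose coefficients are found by back-substitution from the two outer ends; they are
  Horner tails of the products of the x_i^-2.  The resulting triangular matrix has diagonal
  entries -a_n and, in the last place, 1 plus the two sums of the theorem.

  At the ratios x_n of an eigenvector u, the products of the x_i^-2 telescope to u(j)^2 / u(0)^2,
  so the normalisation of u turns the bracket into u(0)^-2, and the n-th row of the eigenvalue
  equation divided by u(n) says exactly that the n-th component of F_L is b_n.
*)

lemma DERIV_if_const:
  "(c \<Longrightarrow> (f has_real_derivative D) F) \<Longrightarrow> (\<not> c \<Longrightarrow> (g has_real_derivative D') F) \<Longrightarrow>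
    E = (if c then D else D') \<Longrightarrow> ((\<lambda>x. if c then f x else g x) has_real_derivative E) F"
  by (cases c) auto

lemma sum_delta3:
  fixes A B C :: "'a :: comm_monoid_add"
  assumes "finite S" "x \<noteq> y" "x \<noteq> z" "y \<noteq> z"
  shows "(\<Sum>m\<in>S. if m = x then A else if m = y then B else if m = z then C else 0) =
    (if x \<in> S then A else 0) + (if y \<in> S then B else 0) + (if z \<in> S then C else 0)"
proof -
  have "(\<Sum>m\<in>S. if m = x then A else if m = y then B else if m = z then C else 0) =
      (\<Sum>m\<in>S. (if m = x then A else 0) + (if m = y then B else 0) + (if m = z then C else 0))"
    using assms by (intro sum.cong) auto
  then show ?thesis using assms by (simp add: sum.distrib)
qed

lemma sum_atLeastAtMost_symmetric:
  fixes f :: "int \<Rightarrow> 'a :: comm_monoid_add"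
  assumes "0 \<le> l"
  shows "(\<Sum>n = -l..l. f n) = f 0 + (\<Sum>j = 1..l. f j) + (\<Sum>j = 1..l. f (- j))"
proof -
  have "{-l..l} = insert 0 ({1..l} \<union> {-l..-1})" using assms by auto
  moreover have "sum f {-l..-1} = (\<Sum>j = 1..l. f (- j))"
    by (rule sum.reindex_bij_witness[of _ uminus uminus]) auto
  ultimately show ?thesis by (simp add: sum.union_disjoint add.assoc)
qed

lemma prod_telescope_int:
  fixes f :: "int \<Rightarrow> 'a :: field"
  assumes "0 \<le> j" and "\<And>i. 0 \<le> i \<Longrightarrow> i \<le> j \<Longrightarrow> f i \<noteq> 0"
  shows "(\<Prod>i = 1..j. f i / f (i - 1)) = f j / f 0"
  using assms
proof (induction j rule: int_ge_induct)
  case (step j)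
  have "{1..j + 1} = insert (j + 1) {1..j}" using step.hyps by auto
  then show ?case using step by simp
qed simp

lemma det_conj_permutes:
  fixes A :: "'a :: comm_ring_1 mat"
  assumes A: "A \<in> carrier_mat n n" and \<sigma>: "\<sigma> permutes {0..<n}"
  shows "det (mat n n (\<lambda>(i, j). A $$ (\<sigma> i, \<sigma> j))) = det A"
proof -
  define R where "R = mat n n (\<lambda>(i, j). A $$ (\<sigma> i, j))"
  have R: "R \<in> carrier_mat n n" by (simp add: R_def)
  have "transpose_mat (mat n n (\<lambda>(i, j). A $$ (\<sigma> i, \<sigma> j))) =
      mat n n (\<lambda>(i, j). transpose_mat R $$ (\<sigma> i, j))"
    using \<sigma> by (auto simp: R_def permutes_in_image)
  then have "det (mat n n (\<lambda>(i, j). A $$ (\<sigma> i, \<sigma> j))) = signof \<sigma> * det (transpose_mat R)"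
    by (metis R det_permute_rows det_transpose mat_carrier transpose_carrier_mat \<sigma>)
  also have "det (transpose_mat R) = signof \<sigma> * det A"
    using det_transpose[OF R] det_permute_rows[OF A \<sigma>] by (simp add: R_def)
  also have "signof \<sigma> * (signof \<sigma> * det A) = det A"
    by (simp add: mult.assoc[symmetric] of_int_mult[symmetric] del: of_int_mult)
  finally show ?thesis .
qed

(* Cramer: as c_n = 1, replacing column n by A c does not change the determinant,
   and the resulting matrix is lower triangular. *)
lemma det_by_column_elimination:
  fixes A :: "'a :: comm_ring_1 mat" and c :: "'a vec"
  assumes A: "A \<in> carrier_mat (Suc n) (Suc n)"
    and lower: "\<And>i j. i < j \<Longrightarrow> j < n \<Longrightarrow> A $$ (i, j) = 0"
    and c: "c \<in> carrier_vec (Suc n)" "c $ n = 1"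
    and elim: "\<And>i. i < n \<Longrightarrow> (A *\<^sub>v c) $ i = 0"
  shows "det A = (\<Prod>i<n. A $$ (i, i)) * (A *\<^sub>v c) $ n"
proof -
  define B where "B = replace_col A (A *\<^sub>v c) n"
  have B: "B \<in> carrier_mat (Suc n) (Suc n)" using A by (simp add: B_def replace_col_def)
  have "det A = det B" using cramer_lemma_mat[OF A c(1), of n] c(2) by (simp add: B_def)
  also have "\<dots> = prod_list (diag_mat B)"
    by (rule det_lower_triangular[OF _ B]) (use A lower elim in \<open>auto simp: B_def replace_col_def\<close>)
  also have "\<dots> = (\<Prod>i<n. B $$ (i, i)) * B $$ (n, n)"
    using B by (simp add: prod_list_diag_prod atLeast0LessThan)
  also have "\<dots> = (\<Prod>i<n. A $$ (i, i)) * (A *\<^sub>v c) $ n"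
    using A by (auto simp: B_def replace_col_def intro!: prod.cong)
  finally show ?thesis .
qed

(* horner_tail y l t = 1 + y (t+1) * (1 + y (t+2) * (... * (1 + y l))) *)
definition horner_tail :: "(int \<Rightarrow> 'a :: comm_semiring_1) \<Rightarrow> int \<Rightarrow> int \<Rightarrow> 'a" where
  "horner_tail y l t = (\<Sum>j = t..l. \<Prod>i = t + 1..j. y i)"

lemma horner_tail_shift:
  "y (t + 1) * horner_tail y l (t + 1) = (\<Sum>j = t + 1..l. \<Prod>i = t + 1..j. y i)"
  unfolding horner_tail_def sum_distrib_left
proof (rule sum.cong)
  fix j assume "j \<in> {t + 1..l}"
  then have "{t + 1..j} = insert (t + 1) {t + 1 + 1..j}" by auto
  then show "y (t + 1) * (\<Prod>i = t + 1 + 1..j. y i) = (\<Prod>i = t + 1..j. y i)" by simp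
qed simp

lemma horner_tail_step:
  assumes "t \<le> l"
  shows "horner_tail y l t = 1 + y (t + 1) * horner_tail y l (t + 1)"
proof -
  have "{t..l} = insert t {t + 1..l}" using assms by auto
  then show ?thesis unfolding horner_tail_shift by (simp add: horner_tail_def)
qed

(* a_k couples the sites k and k + 1; inner_bond a m couples site m to its neighbour nearer 0. *)
definition inner_bond :: "(int \<Rightarrow> real) \<Rightarrow> int \<Rightarrow> real" where
  "inner_bond a m = (if m < 0 then a m else a (m - 1))"

definition jacobian_entry :: "(int \<Rightarrow> real) \<Rightarrow> (int \<Rightarrow> real) \<Rightarrow> int \<Rightarrow> int \<Rightarrow> real" where
  "jacobian_entry a p n m =
     (if m = 0 then 1
      else if n = m then - inner_bond a m
      else if n = m - sgn m then inner_bond a m / (p m)\<^sup>2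
      else 0)"

lemma FL_has_real_derivative:
  assumes n: "n \<in> {- int L..int L}" and m: "m \<in> {- int L..int L}"
    and p: "\<forall>k\<in>{- int L..int L} - {0}. p k \<noteq> 0"
  shows "((\<lambda>t. FL L a (p(m := t)) n) has_real_derivative jacobian_entry a p n m) (at (p m))"
proof -
  consider "m = 0" | "m \<noteq> 0" "n < 0" | "m \<noteq> 0" "n = 0" | "m \<noteq> 0" "n > 0" by linarith
  then show ?thesis
  proof cases
    case 1
    then show ?thesis using n p
      by (cases "n < 0"; cases "n = 0"; auto simp: FL_def xinv_def jacobian_entry_def
          intro!: DERIV_if_const derivative_eq_intros split: if_splits)
  qed (use n m p in \<open>auto simp: FL_def xinv_def jacobian_entry_def inner_bond_def
      power2_eq_square field_simps intro!: DERIV_if_const derivative_eq_intros split: if_splits\<close>)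
qed

lemma jac_FL_index:
  assumes "i < 2 * L + 1" "j < 2 * L + 1" and "\<forall>k\<in>{- int L..int L} - {0}. p k \<noteq> 0"
  shows "jac_FL L a p $$ (i, j) = jacobian_entry a p (idx L i) (idx L j)"
  using assms by (auto simp: jac_FL_def idx_def intro!: DERIV_imp_deriv FL_has_real_derivative)

definition elim_weight :: "(int \<Rightarrow> real) \<Rightarrow> nat \<Rightarrow> int \<Rightarrow> real" where
  "elim_weight p L m = horner_tail (\<lambda>i. 1 / (p (sgn m * i))\<^sup>2) (int L) \<bar>m\<bar>"

lemma elim_weight_step:
  assumes "m \<noteq> 0" "\<bar>m\<bar> \<le> int L"
  shows "elim_weight p L m = 1 + elim_weight p L (m + sgn m) / (p (m + sgn m))\<^sup>2"
proof -
  let ?y = "\<lambda>i. 1 / (p (sgn m * i))\<^sup>2"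
  have "\<bar>m + sgn m\<bar> = \<bar>m\<bar> + 1" "sgn (m + sgn m) = sgn m" "?y (\<bar>m\<bar> + 1) = 1 / (p (m + sgn m))\<^sup>2"
    using assms(1) by (auto simp: sgn_if)
  then show ?thesis using horner_tail_step[OF assms(2), of ?y] by (simp add: elim_weight_def)
qed

lemma elim_weight_beyond: "int L < \<bar>m\<bar> \<Longrightarrow> elim_weight p L m = 0"
  by (simp add: elim_weight_def horner_tail_def)

lemma elim_weight_first:
  assumes "\<sigma> = 1 \<or> \<sigma> = -1"
  shows "elim_weight p L \<sigma> / (p \<sigma>)\<^sup>2 = (\<Sum>j = 1..int L. \<Prod>i = 1..j. 1 / (p (\<sigma> * i))\<^sup>2)"
  using horner_tail_shift[of "\<lambda>i. 1 / (p (\<sigma> * i))\<^sup>2" 0 "int L"] assms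
  by (auto simp: elim_weight_def)

(* Column multipliers c clearing the E-column in every row n \<noteq> 0: for s_m = inner_bond a m * c_m,
   row n demands s_n = 1 + s_(n + sgn n) / x_(n + sgn n)^2, which elim_weight solves inward
   from the outer ends. *)
definition elim_coeff :: "(int \<Rightarrow> real) \<Rightarrow> (int \<Rightarrow> real) \<Rightarrow> nat \<Rightarrow> int \<Rightarrow> real" where
  "elim_coeff a p L m = (if m = 0 then 1 else elim_weight p L m / inner_bond a m)"

lemma jacobian_row_elim:
  assumes L: "1 \<le> L" and n: "n \<in> {- int L..int L}"
    and bonds: "\<And>m. m \<in> {- int L..int L} - {0} \<Longrightarrow> inner_bond a m \<noteq> 0"
  shows "(\<Sum>m = - int L..int L. jacobian_entry a p n m * elim_coeff a p L m) =
    (if n = 0 then 1 + (\<Sum>j = 1..int L. \<Prod>i = 1..j. 1 / (p i)\<^sup>2)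
                   + (\<Sum>j = 1..int L. \<Prod>i = 1..j. 1 / (p (- i))\<^sup>2)
     else 0)"
proof (cases "n = 0")
  case True
  have "(\<Sum>m = - int L..int L. jacobian_entry a p n m * elim_coeff a p L m) =
      (\<Sum>m = - int L..int L. if m = 0 then 1 else if m = 1 then elim_weight p L 1 / (p 1)\<^sup>2
        else if m = -1 then elim_weight p L (-1) / (p (-1))\<^sup>2 else 0)"
    using True bonds by (intro sum.cong) (auto simp: jacobian_entry_def elim_coeff_def sgn_if)
  also have "\<dots> = 1 + elim_weight p L 1 / (p 1)\<^sup>2 + elim_weight p L (-1) / (p (-1))\<^sup>2"
    using L by (subst sum_delta3) auto
  finally show ?thesis using True elim_weight_first[of 1] elim_weight_first[of "-1"] by simp
next
  case False
  let ?m = "n + sgn n"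
  have "(\<Sum>m = - int L..int L. jacobian_entry a p n m * elim_coeff a p L m) =
      (\<Sum>m = - int L..int L. if m = 0 then 1 else if m = n then - elim_weight p L n
        else if m = ?m then elim_weight p L ?m / (p ?m)\<^sup>2 else 0)"
    using False bonds by (intro sum.cong) (auto simp: jacobian_entry_def elim_coeff_def sgn_if)
  also have "\<dots> = 1 - elim_weight p L n + elim_weight p L ?m / (p ?m)\<^sup>2"
    using False n elim_weight_beyond[of L ?m p] by (subst sum_delta3) (auto simp: sgn_if)
  also have "\<dots> = 0" using False n elim_weight_step[of n L p] by (simp add: abs_le_iff)
  finally show ?thesis using False by simp
qed

(* The order -L, ..., -1, L, ..., 1, 0 of the sites: it puts every off-diagonal nonzero entry of
   the Jacobian below the diagonal, except in the E-column, which comes last. *)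
definition elim_order :: "nat \<Rightarrow> nat \<Rightarrow> nat" where
  "elim_order L k = (if k < L \<or> 2 * L < k then k else 3 * L - k)"

lemma elim_order_permutes: "elim_order L permutes {0..<2 * L + 1}"
proof -
  have involution: "elim_order L (elim_order L k) = k" for k by (auto simp: elim_order_def)
  show ?thesis unfolding permutes_def
  proof (intro conjI allI impI)
    fix y show "\<exists>!x. elim_order L x = y"
      by (rule ex1I[of _ "elim_order L y"], simp add: involution, metis involution)
  qed (simp add: elim_order_def)
qed

lemma idx_elim_order:
  "k \<le> 2 * L \<Longrightarrow> idx L (elim_order L k) = (if k < L then int k - int L else int (2 * L) - int k)"
  by (auto simp: idx_def elim_order_def)

lemma bij_betw_idx: "bij_betw (idx L) {..<2 * L + 1} {- int L..int L}"
  by (rule bij_betw_byWitness[where f' = "\<lambda>n. nat (n + int L)"]) (auto simp: idx_def)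

lemma bij_betw_idx_elim_order: "bij_betw (\<lambda>k. idx L (elim_order L k)) {..<2 * L + 1} {- int L..int L}"
  using bij_betw_trans[OF permutes_imp_bij[OF elim_order_permutes, unfolded atLeast0LessThan] bij_betw_idx]
  by (simp add: comp_def)

lemma jacobian_entry_elim_order_upper:
  assumes "k < i" "i < 2 * L"
  shows "jacobian_entry a p (idx L (elim_order L k)) (idx L (elim_order L i)) = 0"
  using assms by (auto simp: idx_elim_order jacobian_entry_def sgn_if)

lemma prod_inner_bond_elim_order:
  "(\<Prod>k<2 * L. inner_bond a (idx L (elim_order L k))) = (\<Prod>n = - int L..int L - 1. a n)"
  by (rule prod.reindex_bij_witness[where j = "\<lambda>k. if k < L then int k - int L else int (2 * L) - int k - 1"
        and i = "\<lambda>n. if n < 0 then nat (n + int L) else nat (int (2 * L) - 1 - n)"])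
    (auto simp: idx_elim_order inner_bond_def)

lemma det_jac_FL:
  assumes L: "1 \<le> L"
    and bonds: "\<And>m. m \<in> {- int L..int L} - {0} \<Longrightarrow> inner_bond a m \<noteq> 0"
    and p: "\<forall>k\<in>{- int L..int L} - {0}. p k \<noteq> 0"
  shows "det (jac_FL L a p) = (\<Prod>k<2 * L. - inner_bond a (idx L (elim_order L k))) *
    (1 + (\<Sum>j = 1..int L. \<Prod>i = 1..j. 1 / (p i)\<^sup>2) + (\<Sum>j = 1..int L. \<Prod>i = 1..j. 1 / (p (- i))\<^sup>2))"
    (is "_ = _ * ?D")
proof -
  define N where "N = 2 * L"
  let ?site = "\<lambda>k. idx L (elim_order L k)"
  define J where "J = mat (Suc N) (Suc N) (\<lambda>(k, i). jac_FL L a p $$ (elim_order L k, elim_order L i))"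
  define c where "c = vec (Suc N) (\<lambda>i. elim_coeff a p L (?site i))"
  have J: "J \<in> carrier_mat (Suc N) (Suc N)" by (simp add: J_def)
  have J_index: "J $$ (k, i) = jacobian_entry a p (?site k) (?site i)" if "k < Suc N" "i < Suc N" for k i
    using that p permutes_in_image[OF elim_order_permutes] by (simp add: J_def jac_FL_index N_def)
  have site_zero: "?site k = 0 \<longleftrightarrow> k = N" if "k < Suc N" for k
    using that by (auto simp: idx_elim_order N_def)
  have row: "(\<Sum>m = - int L..int L. jacobian_entry a p n m * elim_coeff a p L m) = (if n = 0 then ?D else 0)"
    if "n \<in> {- int L..int L}" for n
    by (rule jacobian_row_elim[OF L that]) (use bonds in fastforce)
  have Jc: "(J *\<^sub>v c) $ k = (if k = N then ?D else 0)" if "k < Suc N" for k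
  proof -
    have "(J *\<^sub>v c) $ k = (\<Sum>i<Suc N. jacobian_entry a p (?site k) (?site i) * elim_coeff a p L (?site i))"
      using that J by (simp add: c_def J_index scalar_prod_def atLeast0LessThan)
    also have "\<dots> = (\<Sum>m = - int L..int L. jacobian_entry a p (?site k) m * elim_coeff a p L m)"
      using sum.reindex_bij_betw[OF bij_betw_idx_elim_order] by (simp add: N_def)
    also have "\<dots> = (if k = N then ?D else 0)"
      using that site_zero bij_betw_apply[OF bij_betw_idx_elim_order] by (simp add: row N_def)
    finally show ?thesis .
  qed
  have "det (jac_FL L a p) = det J"
    unfolding J_def N_def
    by (rule det_conj_permutes[symmetric]) (use elim_order_permutes[of L] in \<open>auto simp: jac_FL_def\<close>)
  also have "\<dots> = (\<Prod>k<N. J $$ (k, k)) * (J *\<^sub>v c) $ N"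
    by (rule det_by_column_elimination[OF J])
      (use J_index jacobian_entry_elim_order_upper Jc in \<open>auto simp: N_def c_def idx_elim_order elim_coeff_def\<close>)
  also have "(\<Prod>k<N. J $$ (k, k)) = (\<Prod>k<N. - inner_bond a (?site k))"
    using site_zero by (intro prod.cong) (auto simp: J_index jacobian_entry_def)
  finally show ?thesis by (simp add: Jc N_def)
qed

lemma abs_det_jac_FL:
  assumes L: "1 \<le> L" and apos: "\<And>n. - int L - 1 \<le> n \<Longrightarrow> n \<le> int L \<Longrightarrow> a n > 0"
    and p: "\<forall>k\<in>{- int L..int L} - {0}. p k \<noteq> 0"
  shows "\<bar>det (jac_FL L a p)\<bar> = (\<Prod>n = - int L..int L - 1. a n) *
    (1 + (\<Sum>j = 1..int L. \<Prod>i = 1..j. 1 / (p i)\<^sup>2) + (\<Sum>j = 1..int L. \<Prod>i = 1..j. 1 / (p (- i))\<^sup>2))"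
    (is "_ = _ * ?D")
proof -
  have bonds_pos: "inner_bond a m > 0" if "m \<in> {- int L..int L} - {0}" for m
    using that by (auto simp: inner_bond_def intro!: apos)
  have "inner_bond a (idx L (elim_order L k)) > 0" if "k < 2 * L" for k
    using that by (intro bonds_pos) (auto simp: idx_elim_order)
  then have "\<bar>\<Prod>k<2 * L. - inner_bond a (idx L (elim_order L k))\<bar> =
      (\<Prod>k<2 * L. inner_bond a (idx L (elim_order L k)))"
    unfolding abs_prod by (intro prod.cong) (auto simp: abs_of_pos)
  moreover have "?D \<ge> 0" by (intro add_nonneg_nonneg sum_nonneg prod_nonneg) auto
  moreover have "det (jac_FL L a p) = (\<Prod>k<2 * L. - inner_bond a (idx L (elim_order L k))) * ?D"
    by (rule det_jac_FL[OF L _ p]) (use bonds_pos in fastforce)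
  ultimately show ?thesis by (simp add: abs_mult prod_inner_bond_elim_order)
qed

lemma tridiag_eigenvector_row:
  assumes ev: "eigenvector (tridiag L a b) (vec (2 * L + 1) (\<lambda>i. u (idx L i))) E"
    and n: "n \<in> {- int L..int L}"
  shows "(if n - 1 \<in> {- int L..int L} then a (n - 1) * u (n - 1) else 0) + b n * u n
    + (if n + 1 \<in> {- int L..int L} then a n * u (n + 1) else 0) = E * u n"
proof -
  define i where "i = nat (n + int L)"
  have i: "i < 2 * L + 1" "idx L i = n" using n by (auto simp: i_def idx_def)
  have "E * u n = (tridiag L a b *\<^sub>v vec (2 * L + 1) (\<lambda>i. u (idx L i))) $ i"
    using ev i by (simp add: eigenvector_def tridiag_def)
  also have "\<dots> = (\<Sum>j<2 * L + 1. tridiag L a b $$ (i, j) * u (idx L j))"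
    using i by (simp add: tridiag_def scalar_prod_def atLeast0LessThan)
  also have "\<dots> = (\<Sum>j<2 * L + 1. if idx L j = n - 1 then a (n - 1) * u (n - 1)
      else if idx L j = n then b n * u n else if idx L j = n + 1 then a n * u (n + 1) else 0)"
    using i by (intro sum.cong) (auto simp: tridiag_def idx_def)
  also have "\<dots> = (\<Sum>m = - int L..int L. if m = n - 1 then a (n - 1) * u (n - 1)
      else if m = n then b n * u n else if m = n + 1 then a n * u (n + 1) else 0)"
    by (rule sum.reindex_bij_betw[OF bij_betw_idx])
  also have "\<dots> = (if n - 1 \<in> {- int L..int L} then a (n - 1) * u (n - 1) else 0)
      + (if n \<in> {- int L..int L} then b n * u n else 0)
      + (if n + 1 \<in> {- int L..int L} then a n * u (n + 1) else 0)"
    by (rule sum_delta3) auto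
  finally show ?thesis using n by simp
qed

lemma FL_at_ratios:
  assumes L: "1 \<le> L" and u: "\<forall>n\<in>{- int L..int L}. u n \<noteq> 0"
    and p_neg: "\<forall>n\<in>{- int L..-1}. p n = u (n + 1) / u n"
    and p_pos: "\<forall>n\<in>{1..int L}. p n = u (n - 1) / u n"
    and n: "n \<in> {- int L..int L}"
  shows "FL L a p n * u n = p 0 * u n - (if n - 1 \<in> {- int L..int L} then a (n - 1) * u (n - 1) else 0)
    - (if n + 1 \<in> {- int L..int L} then a n * u (n + 1) else 0)"
proof -
  have ratio: "p k = u (k - sgn k) / u k" if "k \<in> {- int L..int L}" "k \<noteq> 0" for k
    using that p_neg p_pos by (cases "k < 0") auto
  have nonzero: "u k \<noteq> 0" if "k \<in> {- int L..int L}" for k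
    using that u by blast
  consider "n < 0" | "n = 0" | "0 < n" by linarith
  then show ?thesis
    by cases (use n L in \<open>auto simp: FL_def xinv_def ratio nonzero field_simps sgn_if\<close>)
qed

lemma FL_eq_of_eigenvector:
  assumes L: "1 \<le> L"
    and ev: "eigenvector (tridiag L a b) (vec (2 * L + 1) (\<lambda>i. u (idx L i))) E"
    and u: "\<forall>n\<in>{- int L..int L}. u n \<noteq> 0" and p0: "p 0 = E"
    and p_neg: "\<forall>n\<in>{- int L..-1}. p n = u (n + 1) / u n"
    and p_pos: "\<forall>n\<in>{1..int L}. p n = u (n - 1) / u n"
    and n: "n \<in> {- int L..int L}"
  shows "FL L a p n = b n"
proof -
  have "FL L a p n * u n = b n * u n"
    using FL_at_ratios[OF L u p_neg p_pos n, of a] tridiag_eigenvector_row[OF ev n] p0 by simp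
  then show ?thesis using u n by simp
qed

lemma jacobian_factor_of_eigenvector:
  fixes u p :: "int \<Rightarrow> real"
  assumes u: "\<forall>n\<in>{- int L..int L}. u n \<noteq> 0" and norm: "(\<Sum>n = - int L..int L. (u n)\<^sup>2) = 1"
    and p_neg: "\<forall>n\<in>{- int L..-1}. p n = u (n + 1) / u n"
    and p_pos: "\<forall>n\<in>{1..int L}. p n = u (n - 1) / u n"
  shows "1 + (\<Sum>j = 1..int L. \<Prod>i = 1..j. 1 / (p i)\<^sup>2) + (\<Sum>j = 1..int L. \<Prod>i = 1..j. 1 / (p (- i))\<^sup>2)
    = 1 / (u 0)\<^sup>2"
proof -
  have pos: "(\<Prod>i = 1..j. 1 / (p i)\<^sup>2) = (u j)\<^sup>2 / (u 0)\<^sup>2" if "j \<in> {1..int L}" for j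
  proof -
    have "1 / (p i)\<^sup>2 = (u i)\<^sup>2 / (u (i - 1))\<^sup>2" if "i \<in> {1..j}" for i
      using that \<open>j \<in> {1..int L}\<close> p_pos[rule_format, of i] by (simp add: power_divide)
    then have "(\<Prod>i = 1..j. 1 / (p i)\<^sup>2) = (\<Prod>i = 1..j. (u i)\<^sup>2 / (u (i - 1))\<^sup>2)"
      by (rule prod.cong[OF refl])
    also have "\<dots> = (u j)\<^sup>2 / (u 0)\<^sup>2"
      by (rule prod_telescope_int) (use that u in auto)
    finally show ?thesis .
  qed
  have neg: "(\<Prod>i = 1..j. 1 / (p (- i))\<^sup>2) = (u (- j))\<^sup>2 / (u 0)\<^sup>2" if "j \<in> {1..int L}" for j
  proof -
    have "1 / (p (- i))\<^sup>2 = (u (- i))\<^sup>2 / (u (- (i - 1)))\<^sup>2" if "i \<in> {1..j}" for i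
      using that \<open>j \<in> {1..int L}\<close> p_neg[rule_format, of "- i"] by (simp add: power_divide)
    then have "(\<Prod>i = 1..j. 1 / (p (- i))\<^sup>2) = (\<Prod>i = 1..j. (u (- i))\<^sup>2 / (u (- (i - 1)))\<^sup>2)"
      by (rule prod.cong[OF refl])
    also have "\<dots> = (u (- j))\<^sup>2 / (u (- 0))\<^sup>2"
      by (rule prod_telescope_int[where f = "\<lambda>i. (u (- i))\<^sup>2"]) (use that u in auto)
    finally show ?thesis by simp
  qed
  have "(u 0)\<^sup>2 * (1 + (\<Sum>j = 1..int L. \<Prod>i = 1..j. 1 / (p i)\<^sup>2)
      + (\<Sum>j = 1..int L. \<Prod>i = 1..j. 1 / (p (- i))\<^sup>2))
    = (u 0)\<^sup>2 + (\<Sum>j = 1..int L. (u j)\<^sup>2) + (\<Sum>j = 1..int L. (u (- j))\<^sup>2)"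
    using u by (simp add: pos neg sum_distrib_left distrib_left)
  also have "\<dots> = 1"
    using norm sum_atLeastAtMost_symmetric[of "int L" "\<lambda>n. (u n)\<^sup>2"] by simp
  finally show ?thesis using u by (simp add: field_simps)
qed

theorem mainTheorem9:
  fixes L :: nat and a :: "int \<Rightarrow> real"
  assumes L: "L \<ge> 1"
    and apos: "\<And>n. - int L - 1 \<le> n \<Longrightarrow> n \<le> int L \<Longrightarrow> a n > 0"
  shows "(\<forall>p :: int \<Rightarrow> real.
            (\<forall>n\<in>{- int L..int L} - {0}. p n \<noteq> 0) \<longrightarrow>
            \<bar>det (jac_FL L a p)\<bar> =
              (\<Prod>n = - int L..int L - 1. a n) *
              (1 + (\<Sum>j = 1..int L. \<Prod>i = 1..j. 1 / (p i)\<^sup>2)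
                 + (\<Sum>j = 1..int L. \<Prod>i = 1..j. 1 / (p (- i))\<^sup>2)))
       \<and> (\<forall>(u :: int \<Rightarrow> real) (b :: int \<Rightarrow> real) (E :: real) (p :: int \<Rightarrow> real).
            (\<Sum>n = - int L..int L. (u n)\<^sup>2) = 1 \<longrightarrow>
            (\<forall>n\<in>{- int L..int L}. u n \<noteq> 0) \<longrightarrow>
            eigenvector (tridiag L a b) (vec (2 * L + 1) (\<lambda>i. u (idx L i))) E \<longrightarrow>
            p 0 = E \<longrightarrow>
            (\<forall>n\<in>{- int L..-1}. p n = u (n + 1) / u n) \<longrightarrow>
            (\<forall>n\<in>{1..int L}. p n = u (n - 1) / u n) \<longrightarrow>
            \<bar>det (jac_FL L a p)\<bar> = (\<Prod>n = - int L..int L - 1. a n) * (1 / (u 0)\<^sup>2)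
            \<and> (\<forall>n\<in>{- int L..int L}. FL L a p n = b n))"
proof (intro conjI allI impI)
  fix p :: "int \<Rightarrow> real"
  assume "\<forall>n\<in>{- int L..int L} - {0}. p n \<noteq> 0"
  then show "\<bar>det (jac_FL L a p)\<bar> = (\<Prod>n = - int L..int L - 1. a n) *
      (1 + (\<Sum>j = 1..int L. \<Prod>i = 1..j. 1 / (p i)\<^sup>2) + (\<Sum>j = 1..int L. \<Prod>i = 1..j. 1 / (p (- i))\<^sup>2))"
    using abs_det_jac_FL[of L a p] L apos by blast
next
  fix u b :: "int \<Rightarrow> real" and E :: real and p :: "int \<Rightarrow> real"
  assume norm: "(\<Sum>n = - int L..int L. (u n)\<^sup>2) = 1" and u: "\<forall>n\<in>{- int L..int L}. u n \<noteq> 0"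
    and ev: "eigenvector (tridiag L a b) (vec (2 * L + 1) (\<lambda>i. u (idx L i))) E" and p0: "p 0 = E"
    and p_neg: "\<forall>n\<in>{- int L..-1}. p n = u (n + 1) / u n"
    and p_pos: "\<forall>n\<in>{1..int L}. p n = u (n - 1) / u n"
  show "\<forall>n\<in>{- int L..int L}. FL L a p n = b n"
    using FL_eq_of_eigenvector[OF L ev u p0 p_neg p_pos] by blast
  have "\<forall>n\<in>{- int L..int L} - {0}. p n \<noteq> 0"
  proof
    fix n assume "n \<in> {- int L..int L} - {0}"
    then show "p n \<noteq> 0" using u p_neg p_pos by (cases "n < 0") auto
  qed
  from abs_det_jac_FL[of L a p, OF L apos this] jacobian_factor_of_eigenvector[OF u norm p_neg p_pos]
  show "\<bar>det (jac_FL L a p)\<bar> = (\<Prod>n = - int L..int L - 1. a n) * (1 / (u 0)\<^sup>2)" by simp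
qed

end
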